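(* For the MDP $\Lambda$, there exists an optimal policy $\phi^*$ that is a threshold-type age-dependent policy. That is, there exist $K\in\mathbb{N}^+$, a finite action order $(b_1,\dots,b_K)$ with $b_k\in\mathcal{A}$ and $b_k\neq b_{k+1}$ for $1\le k<K$, and thresholds $\theta_{b_k\to b_{k+1}}\in\mathbb{N}^+$, $1\le k<K$, with $\theta_{b_1\to b_2}\le\theta_{b_2\to b_3}\le\dots$, such that $\phi^*(s)=b_1$ for $s<\theta_{b_1\to b_2}$, $\phi^*(s)=b_k$ for $\theta_{b_{k-1}\to b_k}\le s<\theta_{b_k\to b_{k+1}}$ ($1<k<K$), and $\phi^*(s)=b_K$ for $s\ge\theta_{b_{K-1}\to b_K}$.
   Context: Fix $N\in\mathbb{N}^+$ vehicle types $\mathcal{N}=\{1,\dots,N\}$. Type $n$ has arrival probability $p_n\in(0,1]$, mean operational cost $c_n\ge 0$ and mean sensing capability $r_n\in(0,1]$. Fix constants $\beta\in(0,1)$ and $\epsilon>0$. The action set is $\mathcal{A}=2^{\mathcal{N}}$ (all subsets of $\mathcal{N}$, including $\emptyset$). For $a\in\mathcal{A}$ define the success probability $Q_\emptyset=0$ and $Q_a=1-\prod_{n\in a}(1-r_np_n)$ for $a\neq\emptyset$, and the expected recruitment cost $E_a=\sum_{n\in a}p_nc_n$ ($E_\emptyset=0$). For a state (age) $\delta\in\mathbb{N}^+$ define $G_a(\delta)=Q_a(\delta^2+2\delta)\epsilon-(1+\delta)^2\epsilon$ and the immediate cost $u(\delta,a)=(1-\beta)E_a-\beta G_a(\delta)$.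 The MDP $\Lambda$ has state space $\mathbb{N}^+$, action space $\mathcal{A}$, and transitions: from state $s$ under action $a$, go to state $1$ with probability $Q_a$ and to state $s+1$ with probability $1-Q_a$. For a policy $\phi$ the average cost is $V(\phi)=\limsup_{T\to\infty}\frac1T\mathbb{E}^\phi[\sum_{t=1}^T u(S(t),A(t))]$ with $S(1)=1$; a policy is optimal if it minimizes $V$ over all policies. A deterministic stationary policy is a map $\phi:\mathbb{N}^+\to\mathcal{A}$. *)

theory Defs
  imports "HOL-Probability.Probability"
begin

text \<open>Vehicle types are 1..N; an action is a subset of {1..N}.
  Parameters p, c, r are functions nat => real (only values on 1..N matter).\<close>

definition Qa :: "(nat \<Rightarrow> real) \<Rightarrow> (nat \<Rightarrow> real) \<Rightarrow> nat set \<Rightarrow> real" where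
  "Qa p r a = (if a = {} then 0 else 1 - (\<Prod>n\<in>a. 1 - r n * p n))"

definition Ea :: "(nat \<Rightarrow> real) \<Rightarrow> (nat \<Rightarrow> real) \<Rightarrow> nat set \<Rightarrow> real" where
  "Ea p c a = (\<Sum>n\<in>a. p n * c n)"

definition Ga :: "(nat \<Rightarrow> real) \<Rightarrow> (nat \<Rightarrow> real) \<Rightarrow> real \<Rightarrow> nat set \<Rightarrow> nat \<Rightarrow> real" where
  "Ga p r \<epsilon> a \<delta> = Qa p r a * ((real \<delta>)\<^sup>2 + 2 * real \<delta>) * \<epsilon> - (1 + real \<delta>)\<^sup>2 * \<epsilon>"

definition ucost :: "(nat \<Rightarrow> real) \<Rightarrow> (nat \<Rightarrow> real) \<Rightarrow> (nat \<Rightarrow> real) \<Rightarrow> real \<Rightarrow> real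
    \<Rightarrow> nat \<Rightarrow> nat set \<Rightarrow> real" where
  "ucost p c r \<beta> \<epsilon> \<delta> a = (1 - \<beta>) * Ea p c a - \<beta> * Ga p r \<epsilon> a \<delta>"

definition trans :: "(nat \<Rightarrow> real) \<Rightarrow> (nat \<Rightarrow> real) \<Rightarrow> nat \<Rightarrow> nat set \<Rightarrow> nat pmf" where
  "trans p r s a = map_pmf (\<lambda>b. if b then 1 else s + 1) (bernoulli_pmf (Qa p r a))"

text \<open>General (history-dependent, randomized) policies: given the past
  (state, action) pairs and the current state, a distribution over actions.\<close>
type_synonym policy = "(nat \<times> nat set) list \<Rightarrow> nat \<Rightarrow> nat set pmf"

definition valid_policy :: "nat \<Rightarrow> policy \<Rightarrow> bool" where
  "valid_policy N pol \<longleftrightarrow> (\<forall>h s. set_pmf (pol h s) \<subseteq> Pow {1..N})"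

text \<open>Distribution of (history, current state) at time k+1 (k steps done), S(1) = 1.\<close>
fun traj :: "(nat \<Rightarrow> real) \<Rightarrow> (nat \<Rightarrow> real) \<Rightarrow> policy \<Rightarrow> nat
    \<Rightarrow> ((nat \<times> nat set) list \<times> nat) pmf" where
  "traj p r pol 0 = return_pmf ([], 1)"
| "traj p r pol (Suc k) = bind_pmf (traj p r pol k) (\<lambda>(h, s).
      bind_pmf (pol h s) (\<lambda>a. map_pmf (\<lambda>s'. (h @ [(s, a)], s')) (trans p r s a)))"

definition exp_cost :: "(nat \<Rightarrow> real) \<Rightarrow> (nat \<Rightarrow> real) \<Rightarrow> (nat \<Rightarrow> real) \<Rightarrow> real \<Rightarrow> real
    \<Rightarrow> policy \<Rightarrow> nat \<Rightarrow> real" where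
  "exp_cost p c r \<beta> \<epsilon> pol k = measure_pmf.expectation (traj p r pol k)
      (\<lambda>(h, s). measure_pmf.expectation (pol h s) (\<lambda>a. ucost p c r \<beta> \<epsilon> s a))"

definition avg_cost :: "(nat \<Rightarrow> real) \<Rightarrow> (nat \<Rightarrow> real) \<Rightarrow> (nat \<Rightarrow> real) \<Rightarrow> real \<Rightarrow> real
    \<Rightarrow> policy \<Rightarrow> ereal" where
  "avg_cost p c r \<beta> \<epsilon> pol =
     limsup (\<lambda>T. ereal ((\<Sum>k<T. exp_cost p c r \<beta> \<epsilon> pol k) / real T))"

definition stationary :: "(nat \<Rightarrow> nat set) \<Rightarrow> policy" where
  "stationary \<phi> = (\<lambda>h s. return_pmf (\<phi> s))"

definition optimal :: "nat \<Rightarrow> (nat \<Rightarrow> real) \<Rightarrow> (nat \<Rightarrow> real) \<Rightarrow> (nat \<Rightarrow> real) \<Rightarrow> real \<Rightarrow> real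
    \<Rightarrow> policy \<Rightarrow> bool" where
  "optimal N p c r \<beta> \<epsilon> pol \<longleftrightarrow> valid_policy N pol \<and>
     (\<forall>pol'. valid_policy N pol' \<longrightarrow> avg_cost p c r \<beta> \<epsilon> pol \<le> avg_cost p c r \<beta> \<epsilon> pol')"

end

theory Submission
  imports Defs
begin

text \<open>
  Write \<open>u s a = C a + \<eta> (1 - Q a) (s\<^sup>2 + 2 s)\<close> with \<open>\<eta> = \<beta> \<epsilon>\<close>, and let \<open>q\<close> be the largest
  success probability and \<open>a\<^sup>*\<close> the cheapest action attaining it. For large ages the
  quadratic penalty outweighs every saving in \<open>C\<close>, so beyond some age \<open>M\<close> the action \<open>a\<^sup>*\<close>
  is optimal and the relative value function is an explicit quadratic there. Below \<open>M\<close>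
  it is computed by backward induction from the Bellman equation; the gain \<open>g\<close> is then fixed
  by the normalisation \<open>h 1 = 0\<close>, which the intermediate value theorem provides because
  \<open>h 1\<close> depends continuously and strictly decreasingly on \<open>g\<close>.

  Telescoping the Bellman inequality along the trajectory of an arbitrary policy bounds
  its cost from below by \<open>T g + h 1 - E h(S\<^sub>T)\<close>; since \<open>h\<close> grows at most quadratically and
  the cost of a step dominates \<open>\<eta> E S\<^sub>T\<^sub>+\<^sub>1\<^sup>2\<close>, this forces average cost at least \<open>g\<close>.
  The greedy stationary policy attains equality and \<open>h\<close> is bounded below, so its average
  cost is at most \<open>g\<close>. It plays \<open>a\<^sup>*\<close> from age \<open>M\<close> on, and every eventually constant
  policy has threshold form.
\<close>

section \<open>Expectations over finitely supported distributions\<close>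

lemma expectation_cong_pmf:
  fixes f g :: "'a \<Rightarrow> real"
  assumes "\<And>x. x \<in> set_pmf M \<Longrightarrow> f x = g x"
  shows "measure_pmf.expectation M f = measure_pmf.expectation M g"
  using assms by (intro integral_cong_AE) (auto simp: AE_measure_pmf_iff)

lemma expectation_bind_pmf_finite:
  fixes f :: "'b \<Rightarrow> real"
  assumes "finite (set_pmf M)" and "\<And>x. x \<in> set_pmf M \<Longrightarrow> finite (set_pmf (F x))"
  shows "measure_pmf.expectation (bind_pmf M F) f
       = measure_pmf.expectation M (\<lambda>x. measure_pmf.expectation (F x) f)"
  using assms
  by (simp add: pmf_expectation_bind[OF assms(1,2) order_refl] integral_measure_pmf[OF assms(1)])

lemma expectation_mono_pmf_finite:
  fixes f g :: "'a \<Rightarrow> real"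
  assumes "finite (set_pmf M)" and "\<And>x. x \<in> set_pmf M \<Longrightarrow> f x \<le> g x"
  shows "measure_pmf.expectation M f \<le> measure_pmf.expectation M g"
  using assms
  by (intro integral_mono_AE) (auto simp: integrable_measure_pmf_finite AE_measure_pmf_iff)

lemma expectation_add_scaled_pmf_finite:
  fixes f g :: "'a \<Rightarrow> real"
  assumes "finite (set_pmf M)"
  shows "measure_pmf.expectation M (\<lambda>x. f x + b * g x)
       = measure_pmf.expectation M f + b * measure_pmf.expectation M g"
  using assms by (simp add: integrable_measure_pmf_finite)

section \<open>Averages of partial sums\<close>

lemma limsup_avg_le_if_sum_le:
  fixes c :: "nat \<Rightarrow> real"
  assumes "\<And>T. (\<Sum>k<T. c k) \<le> real T * g + B"
  shows "limsup (\<lambda>T. ereal ((\<Sum>k<T. c k) / real T)) \<le> ereal g"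
proof -
  have "eventually (\<lambda>T. ereal ((\<Sum>k<T. c k) / real T) \<le> ereal (g + B / real T)) sequentially"
    using eventually_gt_at_top[of "0::nat"]
  proof eventually_elim
    case (elim T)
    then have "(\<Sum>k<T. c k) / real T \<le> (real T * g + B) / real T"
      using assms[of T] by (intro divide_right_mono) auto
    also have "\<dots> = g + B / real T" using elim by (simp add: field_simps)
    finally show ?case by simp
  qed
  then have "limsup (\<lambda>T. ereal ((\<Sum>k<T. c k) / real T)) \<le> limsup (\<lambda>T. ereal (g + B / real T))"
    by (rule Limsup_mono)
  also have "\<dots> = ereal g"
    by (intro lim_imp_Limsup) (auto intro!: tendsto_eq_intros lim_const_over_n)
  finally show ?thesis .
qed

lemma sum_exceeds_linear_if_terms_grow:
  fixes c :: "nat \<Rightarrow> real"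
  assumes nonneg: "\<And>k. 0 \<le> c k" and "0 \<le> \<kappa>" and "0 < \<delta>"
    and grow: "\<And>T. n0 \<le> T \<Longrightarrow> real (Suc T) * \<delta> - b \<le> \<kappa> * c T"
  shows "\<exists>T\<ge>n0. real T * a \<le> (\<Sum>k<T. c k)"
proof (rule ccontr)
  assume "\<not> ?thesis"
  then have sum_lt: "(\<Sum>k<T. c k) < real T * a" if "n0 \<le> T" for T
    using that not_le by blast
  have bound: "real (Suc n) * \<delta> - b \<le> 2 * \<kappa> * a" if "n0 \<le> n" "1 \<le> n" for n
  proof -
    have "real n * (real (Suc n) * \<delta> - b) = (\<Sum>T\<in>{n..<2*n}. real (Suc n) * \<delta> - b)"
      by simp
    also have "\<dots> \<le> (\<Sum>T\<in>{n..<2*n}. real (Suc T) * \<delta> - b)"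
      using \<open>0 < \<delta>\<close> by (intro sum_mono) simp
    also have "\<dots> \<le> (\<Sum>T\<in>{n..<2*n}. \<kappa> * c T)"
      using that by (intro sum_mono grow) auto
    also have "\<dots> \<le> \<kappa> * (\<Sum>T<2*n. c T)"
      unfolding sum_distrib_left using \<open>0 \<le> \<kappa>\<close> nonneg by (intro sum_mono2) auto
    also have "\<dots> \<le> \<kappa> * (real (2 * n) * a)"
      using sum_lt[of "2 * n"] that \<open>0 \<le> \<kappa>\<close> by (intro mult_left_mono) auto
    also have "\<dots> = real n * (2 * \<kappa> * a)" by simp
    finally have "real n * (real (Suc n) * \<delta> - b) \<le> real n * (2 * \<kappa> * a)" .
    moreover have "0 < real n" using that by simp
    ultimately show ?thesis by simp
  qed
  obtain m where "(2 * \<kappa> * a + b) / \<delta> < real m"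
    using reals_Archimedean2 by blast
  define n where "n = max m (max n0 1)"
  have "real m * \<delta> \<le> real n * \<delta>" and "real n * \<delta> \<le> real (Suc n) * \<delta>"
    using \<open>0 < \<delta>\<close> by (simp_all add: n_def)
  moreover have "2 * \<kappa> * a + b < real m * \<delta>"
    using \<open>(2 * \<kappa> * a + b) / \<delta> < real m\<close> \<open>0 < \<delta>\<close> by (simp add: divide_less_eq)
  moreover have "n0 \<le> n" "1 \<le> n" by (simp_all add: n_def)
  ultimately show False using bound[of n] by linarith
qed

lemma limsup_avg_ge_if_sum_ge:
  fixes c :: "nat \<Rightarrow> real"
  assumes nonneg: "\<And>k. 0 \<le> c k" and "0 \<le> \<kappa>"
    and sum_ge: "\<And>T. real (Suc T) * g - b - \<kappa> * c T \<le> (\<Sum>k<Suc T. c k)"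
  shows "ereal g \<le> limsup (\<lambda>T. ereal ((\<Sum>k<T. c k) / real T))"
proof (rule ccontr)
  assume "\<not> ereal g \<le> limsup (\<lambda>T. ereal ((\<Sum>k<T. c k) / real T))"
  then have "limsup (\<lambda>T. ereal ((\<Sum>k<T. c k) / real T)) < ereal g" by simp
  then obtain g' where g': "limsup (\<lambda>T. ereal ((\<Sum>k<T. c k) / real T)) < ereal g'"
    and "ereal g' < ereal g"
    using ereal_dense2 by blast
  then have gap: "0 < g - g'" by simp
  have "eventually (\<lambda>T. ereal ((\<Sum>k<T. c k) / real T) < ereal g') sequentially"
    by (rule Limsup_lessD[OF g'])
  then obtain T0 where T0: "\<And>T. T \<ge> T0 \<Longrightarrow> (\<Sum>k<T. c k) / real T < g'"
    unfolding eventually_sequentially by auto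
  define n0 where "n0 = max T0 1"
  have sum_lt: "(\<Sum>k<T. c k) < real T * g'" if "n0 \<le> T" for T
    using T0[of T] that by (simp add: n0_def divide_less_eq mult.commute)
  have "real (Suc T) * (g - g') - b \<le> \<kappa> * c T" if "n0 \<le> T" for T
    using sum_ge[of T] sum_lt[of "Suc T"] that by (simp add: algebra_simps)
  from sum_exceeds_linear_if_terms_grow[OF nonneg \<open>0 \<le> \<kappa>\<close> gap this]
  obtain T where "n0 \<le> T" and "real T * g' \<le> (\<Sum>k<T. c k)" by blast
  with sum_lt[of T] show False by simp
qed

lemma Min_image_le_shift:
  fixes F G :: "'a \<Rightarrow> real"
  assumes "finite S" "S \<noteq> {}" and "\<And>a. a \<in> S \<Longrightarrow> G a \<le> F a + d"
  shows "Min (G ` S) \<le> Min (F ` S) + d"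
proof -
  have "Min (F ` S) \<in> F ` S" using assms(1,2) by (intro Min_in) auto
  then obtain a where "a \<in> S" and "Min (F ` S) = F a" by auto
  then show ?thesis
    using assms Min_le[of "G ` S" "G a"] by fastforce
qed

lemma exists_root_if_descending_lipschitz:
  fixes f :: "real \<Rightarrow> real"
  assumes cont: "continuous_on UNIV f" and descent: "\<And>x y. x \<le> y \<Longrightarrow> f y \<le> f x - (y - x)"
  shows "\<exists>x. f x = 0"
proof (cases "0 \<le> f 0")
  case True
  have "f (f 0) \<le> 0" using descent[OF True] by simp
  then show ?thesis
    using IVT2'[of f "f 0" 0 0] True continuous_on_subset[OF cont] by blast
next
  case False
  have "0 \<le> f (f 0)" using descent[of "f 0" 0] False by simp
  then show ?thesis
    using IVT2'[of f 0 0 "f 0"] False continuous_on_subset[OF cont] by force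
qed

section \<open>Eventually constant policies have threshold form\<close>

text \<open>\<open>b k\<close> is the paper's \<open>b\<^sub>k\<close> and \<open>\<theta> k\<close> its threshold for the switch \<open>b\<^sub>k \<rightarrow> b\<^sub>k\<^sub>+\<^sub>1\<close>.\<close>
definition threshold_form :: "(nat \<Rightarrow> 'a) \<Rightarrow> nat \<Rightarrow> (nat \<Rightarrow> 'a) \<Rightarrow> (nat \<Rightarrow> nat) \<Rightarrow> bool" where
  "threshold_form \<phi> K b \<theta> \<longleftrightarrow> K \<ge> 1 \<and>
     (\<forall>k. 1 \<le> k \<and> k < K \<longrightarrow> b k \<noteq> b (k + 1)) \<and>
     (\<forall>k. 1 \<le> k \<and> k < K \<longrightarrow> \<theta> k \<ge> 1) \<and>
     (\<forall>k. 1 \<le> k \<and> k + 1 < K \<longrightarrow> \<theta> k \<le> \<theta> (k + 1)) \<and>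
     (\<forall>s\<ge>1. \<forall>k\<in>{1..K}. (k = 1 \<or> \<theta> (k - 1) \<le> s) \<and> (k = K \<or> s < \<theta> k) \<longrightarrow> \<phi> s = b k)"

lemma threshold_form_const:
  assumes "\<forall>s\<ge>1. \<phi> s = y"
  shows "\<exists>K b \<theta>. threshold_form \<phi> K b \<theta> \<and> b ` {1..K} \<subseteq> \<phi> ` {1..}
    \<and> (\<forall>k. 1 \<le> k \<and> k < K \<longrightarrow> \<theta> k \<le> M)"
proof (intro exI conjI)
  show "threshold_form \<phi> 1 (\<lambda>_. y) (\<lambda>_. 0)"
    using assms by (auto simp: threshold_form_def)
  show "(\<lambda>_. y) ` {1..1} \<subseteq> \<phi> ` {1..}"
    using assms by (auto intro: image_eqI[of _ _ 1])
qed simp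

lemma threshold_form_value:
  assumes "threshold_form \<phi> K b \<theta>" and "1 \<le> s" and "k \<in> {1..K}"
    and "k = 1 \<or> \<theta> (k - 1) \<le> s" and "k = K \<or> s < \<theta> k"
  shows "\<phi> s = b k"
  using assms unfolding threshold_form_def by blast

lemma threshold_form_beyond_thresholds:
  assumes form: "threshold_form \<phi> K b \<theta>" and below: "\<forall>k. 1 \<le> k \<and> k < K \<longrightarrow> \<theta> k \<le> M"
    and "1 \<le> M" and "M \<le> s"
  shows "\<phi> s = b K"
proof -
  have K: "1 \<le> K" using form by (simp add: threshold_form_def)
  then have "K = 1 \<or> \<theta> (K - 1) \<le> M"
    using below by (cases "K = 1") auto
  then have "K = 1 \<or> \<theta> (K - 1) \<le> s" using \<open>M \<le> s\<close> by linarith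
  then show ?thesis
    using threshold_form_value[OF form, of s K] K \<open>1 \<le> M\<close> \<open>M \<le> s\<close> by simp
qed

lemma threshold_form_update_tail_value:
  assumes form: "threshold_form \<psi> K b \<theta>" and below: "\<forall>k. 1 \<le> k \<and> k < K \<longrightarrow> \<theta> k \<le> M"
    and "1 \<le> M" and s: "1 \<le> s" and k: "k \<in> {1..K + 2}"
    and lo: "k = 1 \<or> (\<theta>(K := M, K + 1 := Suc M)) (k - 1) \<le> s"
    and hi: "k = K + 2 \<or> s < (\<theta>(K := M, K + 1 := Suc M)) k"
  shows "(\<psi>(M := x)) s = (b(K + 1 := x, K + 2 := b K)) k"
proof -
  have K: "1 \<le> K" using form by (simp add: threshold_form_def)
  consider "k < K" | "k = K" | "k = K + 1" | "k = K + 2"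
    using k unfolding atLeastAtMost_iff by linarith
  then show ?thesis
  proof cases
    case 1
    then have "(\<theta>(K := M, K + 1 := Suc M)) k = \<theta> k"
      and "(\<theta>(K := M, K + 1 := Suc M)) (k - 1) = \<theta> (k - 1)" by auto
    then have lo': "k = 1 \<or> \<theta> (k - 1) \<le> s" and "s < \<theta> k" using lo hi 1 by auto
    moreover have "\<theta> k \<le> M" using below 1 k by simp
    ultimately have "s \<noteq> M" and "\<psi> s = b k"
      using threshold_form_value[OF form s _ lo'] 1 k by auto
    then show ?thesis using 1 by simp
  next
    case 2
    have "(\<theta>(K := M, K + 1 := Suc M)) (K - 1) = \<theta> (K - 1)" using K by auto
    then have "K = 1 \<or> \<theta> (K - 1) \<le> s" using lo 2 by auto
    moreover have "s < M" using hi 2 by simp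
    ultimately show ?thesis using threshold_form_value[OF form s, of K] 2 K by simp
  next
    case 3
    then have "s = M" using lo hi K by simp
    then show ?thesis using 3 by simp
  next
    case 4
    then have "M < s" using lo K by simp
    then show ?thesis
      using threshold_form_beyond_thresholds[OF form below \<open>1 \<le> M\<close>, of s] 4 by simp
  qed
qed

lemma threshold_form_update_tail:
  assumes form: "threshold_form \<psi> K b \<theta>" and below: "\<forall>k. 1 \<le> k \<and> k < K \<longrightarrow> \<theta> k \<le> M"
    and "1 \<le> M" and "x \<noteq> b K"
  shows "threshold_form (\<psi>(M := x)) (K + 2) (b(K + 1 := x, K + 2 := b K))
    (\<theta>(K := M, K + 1 := Suc M))"
    (is "threshold_form _ _ ?b ?\<theta>")
  unfolding threshold_form_def
proof (intro conjI allI impI ballI)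
  have dist: "\<forall>k. 1 \<le> k \<and> k < K \<longrightarrow> b k \<noteq> b (k + 1)"
    and pos: "\<forall>k. 1 \<le> k \<and> k < K \<longrightarrow> \<theta> k \<ge> 1"
    and mono: "\<forall>k. 1 \<le> k \<and> k + 1 < K \<longrightarrow> \<theta> k \<le> \<theta> (k + 1)"
    using form by (simp_all add: threshold_form_def)
  fix k assume k: "1 \<le> k \<and> k < K + 2"
  then consider "k < K" | "k = K" | "k = K + 1" by linarith
  then show "?b k \<noteq> ?b (k + 1)" using k dist \<open>x \<noteq> b K\<close> by cases auto
  show "1 \<le> ?\<theta> k" using k pos \<open>1 \<le> M\<close> by (cases "k < K") (auto simp: less_Suc_eq)
next
  fix k assume "1 \<le> k \<and> k + 1 < K + 2"
  then show "?\<theta> k \<le> ?\<theta> (k + 1)"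
    using form below by (cases "k + 1 < K") (auto simp: threshold_form_def less_Suc_eq)
next
  fix s k assume "1 \<le> s" "k \<in> {1..K + 2}" "(k = 1 \<or> ?\<theta> (k - 1) \<le> s) \<and> (k = K + 2 \<or> s < ?\<theta> k)"
  then show "(\<psi>(M := x)) s = ?b k"
    using threshold_form_update_tail_value[OF form below \<open>1 \<le> M\<close>] by blast
qed simp

lemma threshold_form_update_step:
  assumes form: "threshold_form \<psi> K b \<theta>" and range: "b ` {1..K} \<subseteq> \<psi> ` {1..}"
    and below: "\<forall>k. 1 \<le> k \<and> k < K \<longrightarrow> \<theta> k \<le> M"
    and "1 \<le> M" and tail: "\<forall>s\<ge>M. \<psi> s = y" and "x \<noteq> y"
  shows "\<exists>K b \<theta>. threshold_form (\<psi>(M := x)) K b \<theta> \<and> b ` {1..K} \<subseteq> (\<psi>(M := x)) ` {1..}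
    \<and> (\<forall>k. 1 \<le> k \<and> k < K \<longrightarrow> \<theta> k \<le> Suc M)"
proof (intro exI conjI)
  have K: "1 \<le> K" using form by (simp add: threshold_form_def)
  have "b K = y"
    using threshold_form_beyond_thresholds[OF form below \<open>1 \<le> M\<close> order_refl] tail by simp
  with threshold_form_update_tail[OF form below \<open>1 \<le> M\<close>] \<open>x \<noteq> y\<close>
  show "threshold_form (\<psi>(M := x)) (K + 2) (b(K + 1 := x, K + 2 := b K))
    (\<theta>(K := M, K + 1 := Suc M))"
    by simp
  have "(b(K + 1 := x, K + 2 := b K)) ` {1..K + 2} \<subseteq> insert x (b ` {1..K})"
    using K by (auto simp: image_iff)
  also have "\<dots> \<subseteq> (\<psi>(M := x)) ` {1..}"
  proof -
    have "\<psi> s \<in> (\<psi>(M := x)) ` {1..}" if "s \<in> {1..}" for s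
    proof (cases "s = M")
      case True
      then have "\<psi> s = (\<psi>(M := x)) (Suc M)" using tail by simp
      then show ?thesis by (rule image_eqI) simp
    next
      case False
      then have "\<psi> s = (\<psi>(M := x)) s" by simp
      then show ?thesis by (rule image_eqI) (use that in simp)
    qed
    then have "\<psi> ` {1..} \<subseteq> (\<psi>(M := x)) ` {1..}" by (rule image_subsetI)
    with range have "b ` {1..K} \<subseteq> (\<psi>(M := x)) ` {1..}" by (rule order_trans)
    moreover have "x \<in> (\<psi>(M := x)) ` {1..}" using \<open>1 \<le> M\<close> by (intro image_eqI[of _ _ M]) auto
    ultimately show ?thesis by (simp add: insert_subset)
  qed
  finally show "(b(K + 1 := x, K + 2 := b K)) ` {1..K + 2} \<subseteq> (\<psi>(M := x)) ` {1..}" .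
  show "\<forall>k. 1 \<le> k \<and> k < K + 2 \<longrightarrow> (\<theta>(K := M, K + 1 := Suc M)) k \<le> Suc M"
    using below by (auto simp: less_Suc_eq)
qed

lemma threshold_form_if_eventually_const:
  assumes "\<forall>s\<ge>M. \<phi> s = y"
  shows "\<exists>K b \<theta>. threshold_form \<phi> K b \<theta> \<and> b ` {1..K} \<subseteq> \<phi> ` {1..}
    \<and> (\<forall>k. 1 \<le> k \<and> k < K \<longrightarrow> \<theta> k \<le> M)"
  using assms
proof (induction M arbitrary: \<phi>)
  case 0
  then show ?case by (intro threshold_form_const[of \<phi> y]) simp
next
  case (Suc M)
  consider "\<phi> M = y" | "M = 0" | "M \<ge> 1" "\<phi> M \<noteq> y" by linarith
  then show ?case
  proof cases
    case 1
    have "\<phi> s = y" if "M \<le> s" for s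
      using that 1 Suc.prems by (cases "s = M") auto
    then have "\<forall>s\<ge>M. \<phi> s = y" by blast
    from Suc.IH[OF this] show ?thesis by (meson le_SucI)
  next
    case 2
    then show ?thesis using Suc.prems by (intro threshold_form_const[of \<phi> y]) simp
  next
    case 3
    have "\<forall>s\<ge>M. (\<phi>(M := y)) s = y" using Suc.prems by (auto simp: Suc_le_eq)
    from Suc.IH[OF this] obtain K b \<theta> where "threshold_form (\<phi>(M := y)) K b \<theta>"
      and "b ` {1..K} \<subseteq> (\<phi>(M := y)) ` {1..}" and "\<forall>k. 1 \<le> k \<and> k < K \<longrightarrow> \<theta> k \<le> M"
      by blast
    from threshold_form_update_step[OF this 3(1) \<open>\<forall>s\<ge>M. (\<phi>(M := y)) s = y\<close> 3(2)]
    show ?thesis unfolding fun_upd_upd fun_upd_triv .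
  qed
qed

section \<open>The age process and the verification theorem\<close>

lemma finite_set_pmf_policy:
  "valid_policy N pol \<Longrightarrow> finite (set_pmf (pol h s))"
  unfolding valid_policy_def by (meson finite_Pow_iff finite_atLeastAtMost finite_subset)

lemma policy_action_subset:
  "valid_policy N pol \<Longrightarrow> a \<in> set_pmf (pol h s) \<Longrightarrow> a \<subseteq> {1..N}"
  unfolding valid_policy_def by blast

lemma finite_set_pmf_traj:
  assumes "valid_policy N pol"
  shows "finite (set_pmf (traj p r pol k))"
proof (induction k)
  case (Suc k)
  have "finite (set_pmf (trans p r s a))" for s a
    by (simp add: trans_def)
  then show ?case
    using Suc finite_set_pmf_policy[OF assms] by (auto simp: split_beta intro!: finite_UN_I)
qed simp

lemma traj_state_ge_1: "x \<in> set_pmf (traj p r pol k) \<Longrightarrow> 1 \<le> snd x"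
  by (induction k arbitrary: x) (auto simp: trans_def split_beta)

locale recruitment_mdp =
  fixes N :: nat and p c r :: "nat \<Rightarrow> real" and \<beta> \<epsilon> :: real
  assumes N_pos: "N \<ge> 1"
    and p_range: "\<forall>n\<in>{1..N}. 0 < p n \<and> p n \<le> 1"
    and c_nonneg: "\<forall>n\<in>{1..N}. c n \<ge> 0"
    and r_range: "\<forall>n\<in>{1..N}. 0 < r n \<and> r n \<le> 1"
    and \<beta>_pos: "0 < \<beta>" and \<beta>_less_1: "\<beta> < 1" and \<epsilon>_pos: "\<epsilon> > 0"
begin

abbreviation "A \<equiv> Pow {1..N}"
abbreviation "Q \<equiv> Qa p r"
abbreviation "u \<equiv> ucost p c r \<beta> \<epsilon>"
abbreviation "cost \<equiv> exp_cost p c r \<beta> \<epsilon>"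

lemma Qa_bounds:
  assumes "a \<subseteq> {1..N}"
  shows "0 \<le> Q a" and "Q a \<le> 1"
proof -
  have "0 \<le> 1 - r n * p n \<and> 1 - r n * p n \<le> 1" if "n \<in> a" for n
  proof -
    have "0 < r n" "r n \<le> 1" "0 < p n" "p n \<le> 1"
      using that assms p_range r_range by auto
    then show ?thesis using mult_le_one[of "r n" "p n"] by simp
  qed
  then have "0 \<le> (\<Prod>n\<in>a. 1 - r n * p n)" "(\<Prod>n\<in>a. 1 - r n * p n) \<le> 1"
    by (auto intro: prod_nonneg prod_le_1)
  then show "0 \<le> Q a" "Q a \<le> 1" by (auto simp: Qa_def)
qed

lemma Ea_nonneg:
  assumes "a \<subseteq> {1..N}"
  shows "0 \<le> Ea p c a"
  unfolding Ea_def
proof (intro sum_nonneg)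
  fix n assume "n \<in> a"
  then have "0 < p n" "0 \<le> c n" using assms p_range c_nonneg by auto
  then show "0 \<le> p n * c n" by simp
qed

definition \<eta> :: real where "\<eta> = \<beta> * \<epsilon>"

definition fixed_cost :: "nat set \<Rightarrow> real" where "fixed_cost a = (1 - \<beta>) * Ea p c a + \<eta>"

lemma \<eta>_pos: "0 < \<eta>"
  using \<beta>_pos \<epsilon>_pos by (simp add: \<eta>_def)

lemma ucost_eq: "u s a = fixed_cost a + \<eta> * (1 - Q a) * (real s ^ 2 + 2 * real s)"
  by (simp add: ucost_def Ga_def \<eta>_def fixed_cost_def power2_eq_square algebra_simps)

text \<open>The cost dominates \<open>\<eta>\<close> times the expected square of the next age.\<close>
lemma ucost_ge:
  assumes "a \<subseteq> {1..N}"
  shows "\<eta> * (Q a * 1\<^sup>2 + (1 - Q a) * (real s + 1)\<^sup>2) \<le> u s a"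
proof -
  have "0 \<le> (1 - \<beta>) * Ea p c a" using Ea_nonneg[OF assms] \<beta>_less_1 by simp
  then show ?thesis by (simp add: ucost_eq fixed_cost_def power2_eq_square algebra_simps)
qed

lemma ucost_nonneg:
  assumes "a \<subseteq> {1..N}"
  shows "0 \<le> u s a"
proof -
  have "0 \<le> \<eta> * (Q a * 1\<^sup>2 + (1 - Q a) * (real s + 1)\<^sup>2)"
    using Qa_bounds[OF assms] \<eta>_pos by (intro mult_nonneg_nonneg add_nonneg_nonneg) auto
  then show ?thesis using ucost_ge[OF assms, of s] by linarith
qed

lemma expectation_trans:
  "a \<subseteq> {1..N} \<Longrightarrow> measure_pmf.expectation (trans p r s a) f = Q a * f 1 + (1 - Q a) * f (s + 1)"
  using Qa_bounds[of a] by (simp add: trans_def mult_ac)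

definition exp_state :: "policy \<Rightarrow> (nat \<Rightarrow> real) \<Rightarrow> nat \<Rightarrow> real" where
  "exp_state pol f k = measure_pmf.expectation (traj p r pol k) (\<lambda>x. f (snd x))"

lemma exp_state_0: "exp_state pol f 0 = f 1"
  by (simp add: exp_state_def)

lemma exp_state_Suc:
  assumes pol: "valid_policy N pol"
  shows "exp_state pol f (Suc k) = measure_pmf.expectation (traj p r pol k)
    (\<lambda>x. measure_pmf.expectation (pol (fst x) (snd x)) (\<lambda>a. Q a * f 1 + (1 - Q a) * f (snd x + 1)))"
proof -
  have fin_trans: "finite (set_pmf (trans p r s a))" for s a
    by (simp add: trans_def)
  have "exp_state pol f (Suc k) = measure_pmf.expectation (traj p r pol k)
    (\<lambda>x. measure_pmf.expectation (pol (fst x) (snd x))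
      (\<lambda>a. measure_pmf.expectation (trans p r (snd x) a) f))"
    unfolding exp_state_def traj.simps
    using finite_set_pmf_traj[OF pol] finite_set_pmf_policy[OF pol] fin_trans
    by (simp add: expectation_bind_pmf_finite split_beta)
  also have "\<dots> = measure_pmf.expectation (traj p r pol k)
    (\<lambda>x. measure_pmf.expectation (pol (fst x) (snd x)) (\<lambda>a. Q a * f 1 + (1 - Q a) * f (snd x + 1)))"
    by (intro expectation_cong_pmf expectation_trans) (meson policy_action_subset[OF pol])
  finally show ?thesis .
qed

lemma exp_state_mono:
  assumes "valid_policy N pol" and "\<And>s. 1 \<le> s \<Longrightarrow> f s \<le> g s"
  shows "exp_state pol f k \<le> exp_state pol g k"
  unfolding exp_state_def using assms traj_state_ge_1
  by (intro expectation_mono_pmf_finite finite_set_pmf_traj) auto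

lemma exp_state_affine:
  assumes "valid_policy N pol"
  shows "exp_state pol (\<lambda>s. x + y * f s) k = x + y * exp_state pol f k"
proof -
  have "finite (set_pmf (traj p r pol k))" by (rule finite_set_pmf_traj[OF assms])
  from expectation_add_scaled_pmf_finite[OF this, of "\<lambda>_. x"] show ?thesis
    by (simp add: exp_state_def)
qed

lemma exp_cost_eq: "cost pol k = measure_pmf.expectation (traj p r pol k)
    (\<lambda>x. measure_pmf.expectation (pol (fst x) (snd x)) (u (snd x)))"
  by (simp add: exp_cost_def case_prod_unfold)

lemma exp_cost_nonneg:
  assumes "valid_policy N pol"
  shows "0 \<le> cost pol k"
proof -
  have "0 \<le> u s a" if "a \<in> set_pmf (pol h s)" for h s a
    using ucost_nonneg policy_action_subset[OF assms that] .
  then show ?thesis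
    unfolding exp_cost_eq
    by (intro integral_nonneg_AE) (auto simp: AE_measure_pmf_iff intro!: integral_nonneg_AE)
qed

lemma exp_state_Suc_le:
  assumes pol: "valid_policy N pol"
    and step: "\<And>h s a. 1 \<le> s \<Longrightarrow> a \<in> set_pmf (pol h s)
      \<Longrightarrow> Q a * f 1 + (1 - Q a) * f (s + 1) \<le> v s + w * u s a"
  shows "exp_state pol f (Suc k) \<le> exp_state pol v k + w * cost pol k"
proof -
  have fin: "finite (set_pmf (traj p r pol k))" "\<And>h s. finite (set_pmf (pol h s))"
    using pol by (auto intro: finite_set_pmf_traj finite_set_pmf_policy)
  have "exp_state pol f (Suc k) \<le> measure_pmf.expectation (traj p r pol k)
    (\<lambda>x. measure_pmf.expectation (pol (fst x) (snd x)) (\<lambda>a. v (snd x) + w * u (snd x) a))"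
    unfolding exp_state_Suc[OF pol] using fin traj_state_ge_1
    by (intro expectation_mono_pmf_finite step) auto
  also have "\<dots> = measure_pmf.expectation (traj p r pol k)
    (\<lambda>x. v (snd x) + w * measure_pmf.expectation (pol (fst x) (snd x)) (u (snd x)))"
    using expectation_add_scaled_pmf_finite[OF fin(2)] by simp
  also have "\<dots> = exp_state pol v k + w * cost pol k"
    unfolding exp_state_def exp_cost_eq by (rule expectation_add_scaled_pmf_finite[OF fin(1)])
  finally show ?thesis .
qed

lemma valid_policy_stationary: "(\<And>s. \<phi> s \<in> A) \<Longrightarrow> valid_policy N (stationary \<phi>)"
  by (simp add: valid_policy_def stationary_def)

lemma sum_cost_ge_if_subsolution:
  assumes pol: "valid_policy N pol"
    and sub: "\<And>s a. 1 \<le> s \<Longrightarrow> a \<in> A \<Longrightarrow> g + h s \<le> u s a + Q a * h 1 + (1 - Q a) * h (s + 1)"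
  shows "real T * g + h 1 - exp_state pol h T \<le> (\<Sum>k<T. cost pol k)"
proof (induction T)
  case 0
  show ?case by (simp add: exp_state_0)
next
  case (Suc T)
  have "exp_state pol (\<lambda>s. 0 + (-1) * h s) (Suc T)
      \<le> exp_state pol (\<lambda>s. - g + (-1) * h s) T + 1 * cost pol T"
    using sub policy_action_subset[OF pol]
    by (intro exp_state_Suc_le[OF pol]) (fastforce simp: algebra_simps)
  then have "g + exp_state pol h T - cost pol T \<le> exp_state pol h (Suc T)"
    unfolding exp_state_affine[OF pol] by simp
  with Suc.IH show ?case by (simp add: distrib_right)
qed

lemma sum_cost_stationary_le:
  assumes act: "\<And>s. \<phi> s \<in> A"
    and eq: "\<And>s. 1 \<le> s \<Longrightarrow> g + h s = u s (\<phi> s) + Q (\<phi> s) * h 1 + (1 - Q (\<phi> s)) * h (s + 1)"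
  shows "(\<Sum>k<T. cost (stationary \<phi>) k) \<le> real T * g + h 1 - exp_state (stationary \<phi>) h T"
proof (induction T)
  case 0
  show ?case by (simp add: exp_state_0)
next
  case (Suc T)
  note pol = valid_policy_stationary[OF act]
  have "exp_state (stationary \<phi>) h (Suc T)
      \<le> exp_state (stationary \<phi>) (\<lambda>s. g + 1 * h s) T + (-1) * cost (stationary \<phi>) T"
    using eq by (intro exp_state_Suc_le[OF pol]) (fastforce simp: stationary_def)
  then have "exp_state (stationary \<phi>) h (Suc T)
      \<le> g + exp_state (stationary \<phi>) h T - cost (stationary \<phi>) T"
    unfolding exp_state_affine[OF pol] by simp
  with Suc.IH show ?case by (simp add: distrib_right)
qed

lemma exp_state_square_le:
  assumes pol: "valid_policy N pol"
  shows "\<eta> * exp_state pol (\<lambda>s. (real s)\<^sup>2) (Suc k) \<le> cost pol k"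
proof -
  have "Q a * (real 1)\<^sup>2 + (1 - Q a) * (real (s + 1))\<^sup>2 \<le> 0 + 1 / \<eta> * u s a"
    if "a \<in> set_pmf (pol h s)" for h s a
    using ucost_ge[OF policy_action_subset[OF pol that], of s] \<eta>_pos
    by (simp add: field_simps)
  then have "exp_state pol (\<lambda>s. (real s)\<^sup>2) (Suc k) \<le> exp_state pol (\<lambda>_. 0) k + 1 / \<eta> * cost pol k"
    by (intro exp_state_Suc_le[OF pol])
  then show ?thesis
    using \<eta>_pos by (simp add: exp_state_def field_simps)
qed

lemma avg_cost_ge_if_subsolution:
  assumes pol: "valid_policy N pol"
    and sub: "\<And>s a. 1 \<le> s \<Longrightarrow> a \<in> A \<Longrightarrow> g + h s \<le> u s a + Q a * h 1 + (1 - Q a) * h (s + 1)"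
    and growth: "\<And>s. 1 \<le> s \<Longrightarrow> h s \<le> B * (real s)\<^sup>2" and "0 \<le> B"
  shows "ereal g \<le> avg_cost p c r \<beta> \<epsilon> pol"
  unfolding avg_cost_def
proof (rule limsup_avg_ge_if_sum_ge[where \<kappa> = "B / \<eta>" and b = "- h 1"])
  show "0 \<le> cost pol k" for k by (rule exp_cost_nonneg[OF pol])
  show "0 \<le> B / \<eta>" using \<open>0 \<le> B\<close> \<eta>_pos by simp
  fix T
  have "exp_state pol h (Suc T) \<le> exp_state pol (\<lambda>s. 0 + B * (real s)\<^sup>2) (Suc T)"
    using growth by (intro exp_state_mono[OF pol]) simp
  also have "\<dots> = B / \<eta> * (\<eta> * exp_state pol (\<lambda>s. (real s)\<^sup>2) (Suc T))"
    unfolding exp_state_affine[OF pol] using \<eta>_pos by simp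
  also have "\<dots> \<le> B / \<eta> * cost pol T"
    using exp_state_square_le[OF pol] \<open>0 \<le> B\<close> \<eta>_pos by (intro mult_left_mono) auto
  finally show "real (Suc T) * g - - h 1 - B / \<eta> * cost pol T \<le> (\<Sum>k<Suc T. cost pol k)"
    using sum_cost_ge_if_subsolution[OF pol sub, of "Suc T"] by linarith
qed

lemma avg_cost_stationary_le:
  assumes act: "\<And>s. \<phi> s \<in> A"
    and eq: "\<And>s. 1 \<le> s \<Longrightarrow> g + h s = u s (\<phi> s) + Q (\<phi> s) * h 1 + (1 - Q (\<phi> s)) * h (s + 1)"
    and lower: "\<And>s. 1 \<le> s \<Longrightarrow> L \<le> h s"
  shows "avg_cost p c r \<beta> \<epsilon> (stationary \<phi>) \<le> ereal g"
  unfolding avg_cost_def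
proof (rule limsup_avg_le_if_sum_le[where B = "h 1 - L"])
  fix T
  have "exp_state (stationary \<phi>) (\<lambda>_. L) T \<le> exp_state (stationary \<phi>) h T"
    using lower by (intro exp_state_mono valid_policy_stationary act)
  then show "(\<Sum>k<T. cost (stationary \<phi>) k) \<le> real T * g + (h 1 - L)"
    using sum_cost_stationary_le[OF act eq, of T] by (simp add: exp_state_def)
qed

theorem optimal_stationary_if_bellman:
  assumes act: "\<And>s. \<phi> s \<in> A"
    and sub: "\<And>s a. 1 \<le> s \<Longrightarrow> a \<in> A \<Longrightarrow> g + h s \<le> u s a + Q a * h 1 + (1 - Q a) * h (s + 1)"
    and eq: "\<And>s. 1 \<le> s \<Longrightarrow> g + h s = u s (\<phi> s) + Q (\<phi> s) * h 1 + (1 - Q (\<phi> s)) * h (s + 1)"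
    and lower: "\<And>s. 1 \<le> s \<Longrightarrow> L \<le> h s"
    and growth: "\<And>s. 1 \<le> s \<Longrightarrow> h s \<le> B * (real s)\<^sup>2" and "0 \<le> B"
  shows "optimal N p c r \<beta> \<epsilon> (stationary \<phi>)"
  unfolding optimal_def
proof (intro conjI allI impI)
  show "valid_policy N (stationary \<phi>)" by (rule valid_policy_stationary[OF act])
  fix pol assume "valid_policy N pol"
  from avg_cost_stationary_le[OF act eq lower]
    avg_cost_ge_if_subsolution[OF this sub growth \<open>0 \<le> B\<close>]
  show "avg_cost p c r \<beta> \<epsilon> (stationary \<phi>) \<le> avg_cost p c r \<beta> \<epsilon> pol" by (rule order_trans)
qed

section \<open>A solution of the Bellman equation\<close>

definition q :: real where "q = Max (Q ` A)"

lemma Q_le_q: "a \<in> A \<Longrightarrow> Q a \<le> q"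
  unfolding q_def by (intro Max_ge) auto

lemma q_in_image: "q \<in> Q ` A"
  unfolding q_def by (intro Max_in) auto

lemma q_pos: "0 < q"
proof -
  have "{1} \<in> A" and "Q {1} = r 1 * p 1" using N_pos by (auto simp: Qa_def)
  moreover have "0 < r 1 * p 1" using p_range r_range N_pos by auto
  ultimately show ?thesis using Q_le_q[of "{1}"] by linarith
qed

lemma q_le_1: "q \<le> 1"
  using q_in_image Qa_bounds by auto

definition a_star :: "nat set" where "a_star = arg_min_on fixed_cost {a \<in> A. Q a = q}"

lemma a_star_in: "a_star \<in> A" and Q_a_star: "Q a_star = q"
  and a_star_min: "a \<in> A \<Longrightarrow> Q a = q \<Longrightarrow> fixed_cost a_star \<le> fixed_cost a"
proof -
  have fin: "finite {a \<in> A. Q a = q}" and ne: "{a \<in> A. Q a = q} \<noteq> {}"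
    using q_in_image by auto
  show "a_star \<in> A" "Q a_star = q"
    using arg_min_if_finite(1)[OF fin ne] by (auto simp: a_star_def)
  show "a \<in> A \<Longrightarrow> Q a = q \<Longrightarrow> fixed_cost a_star \<le> fixed_cost a"
    unfolding a_star_def by (rule arg_min_least[OF fin ne]) simp
qed

text \<open>The quadratic \<open>tail g\<close> is the solution of the relative value recursion
  \<open>h s = u s a_star - g + (1 - q) * h (s + 1)\<close> of the policy that always plays \<open>a_star\<close>.\<close>
definition tail_a :: real where "tail_a = \<eta> * (1 - q) / q"
definition tail_b :: real where "tail_b = 2 * \<eta> * (1 - q) / q\<^sup>2"
definition tail_c :: "real \<Rightarrow> real" where
  "tail_c g = (fixed_cost a_star - g + (1 - q) * (tail_a + tail_b)) / q"
definition tail :: "real \<Rightarrow> nat \<Rightarrow> real" where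
  "tail g s = tail_a * (real s)\<^sup>2 + tail_b * real s + tail_c g"

lemma tail_a_nonneg: "0 \<le> tail_a" and tail_b_nonneg: "0 \<le> tail_b"
  using q_pos q_le_1 \<eta>_pos by (simp_all add: tail_a_def tail_b_def)

lemma tail_rec: "tail g s = u s a_star - g + (1 - q) * tail g (s + 1)"
  using q_pos unfolding ucost_eq Q_a_star tail_def tail_c_def tail_a_def tail_b_def
  by (simp add: field_simps power2_eq_square)

lemma tail_shift: "tail g' s = tail g s - (g' - g) / q"
  using q_pos by (simp add: tail_def tail_c_def field_simps)

lemma tail_c_le_tail: "tail_c g \<le> tail g s"
  using tail_a_nonneg tail_b_nonneg by (simp add: tail_def)

definition cost_ratio_sum :: real where
  "cost_ratio_sum = (\<Sum>a\<in>A. \<bar>fixed_cost a_star - fixed_cost a\<bar> / \<bar>q - Q a\<bar>)"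

text \<open>Beyond age \<open>M\<close> the age penalty \<open>\<eta> (q - Q a) (s\<^sup>2 + 2 s)\<close> saved by \<open>a_star\<close> exceeds
  its extra cost \<open>fixed_cost a_star - fixed_cost a\<close> (the terms of \<open>cost_ratio_sum\<close> with
  \<open>Q a = q\<close> are junk values \<open>x / 0 = 0\<close> and play no role).\<close>
definition M :: nat where "M = nat \<lceil>(cost_ratio_sum + tail_a + tail_b) / \<eta>\<rceil>"

lemma M_large: "cost_ratio_sum + tail_a + tail_b \<le> \<eta> * real M"
proof -
  have "(cost_ratio_sum + tail_a + tail_b) / \<eta> \<le> real M" unfolding M_def by linarith
  then show ?thesis using \<eta>_pos by (simp add: field_simps)
qed

lemma a_star_optimal_beyond_M:
  assumes "M \<le> s" and a: "a \<in> A" and X: "- (tail_a + tail_b) \<le> X"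
  shows "u s a_star + (1 - q) * X \<le> u s a + (1 - Q a) * X"
proof -
  define f where "f = real s ^ 2 + 2 * real s"
  have "fixed_cost a_star - fixed_cost a \<le> (q - Q a) * (\<eta> * f + X)"
  proof (cases "Q a = q")
    case True
    then show ?thesis using a_star_min[OF a] by simp
  next
    case False
    then have gap: "0 < q - Q a" using Q_le_q[OF a] by simp
    have "(fixed_cost a_star - fixed_cost a) / (q - Q a)
        \<le> \<bar>fixed_cost a_star - fixed_cost a\<bar> / \<bar>q - Q a\<bar>"
      using gap by (simp add: divide_right_mono)
    also have "\<dots> \<le> cost_ratio_sum"
      unfolding cost_ratio_sum_def using a by (intro member_le_sum) auto
    also have "cost_ratio_sum \<le> \<eta> * real M - (tail_a + tail_b)"
      using M_large by simp
    also have "\<dots> \<le> \<eta> * f + X"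
    proof -
      have "real M \<le> real s" "0 \<le> (real s)\<^sup>2" using \<open>M \<le> s\<close> by simp_all
      then have "real M \<le> f" unfolding f_def by linarith
      then have "\<eta> * real M \<le> \<eta> * f" using \<eta>_pos by (intro mult_left_mono) auto
      then show ?thesis using X by linarith
    qed
    finally show ?thesis using gap by (simp add: divide_le_eq mult.commute)
  qed
  then show ?thesis
    unfolding ucost_eq Q_a_star f_def[symmetric] by (simp add: algebra_simps)
qed

text \<open>Relative values of the problem truncated at age \<open>M\<close> (beyond which \<open>a_star\<close> is played),
  normalised by \<open>h 1 = 0\<close> only for the right gain \<open>g\<close>.\<close>
function rel_value :: "real \<Rightarrow> nat \<Rightarrow> real" where
  "rel_value g s = (if M \<le> s then tail g s
     else Min ((\<lambda>a. u s a - g + (1 - Q a) * rel_value g (s + 1)) ` A))"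
  by auto
termination by (relation "Wellfounded.measure (\<lambda>(g, s). M - s)") auto

declare rel_value.simps [simp del]

lemma rel_value_tail: "M \<le> s \<Longrightarrow> rel_value g s = tail g s"
  by (simp add: rel_value.simps)

lemma rel_value_Min:
  "s < M \<Longrightarrow> rel_value g s = Min ((\<lambda>a. u s a - g + (1 - Q a) * rel_value g (s + 1)) ` A)"
  by (simp add: rel_value.simps)

lemma rel_value_descent:
  assumes "g \<le> g'"
  shows "rel_value g' s \<le> rel_value g s - (g' - g)"
proof (induction "M - s" arbitrary: s)
  case 0
  have "(g' - g) * q \<le> g' - g"
    using mult_left_le[OF q_le_1, of "g' - g"] assms by (simp add: mult.commute)
  then have "g' - g \<le> (g' - g) / q"
    using q_pos by (simp add: le_divide_eq)
  with 0 show ?case using tail_shift[of g' s g] by (simp add: rel_value_tail)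
next
  case (Suc n)
  then have s: "s < M" by simp
  have "n = M - (s + 1)" using Suc.hyps(2) by simp
  from Suc.hyps(1)[OF this] have IH: "rel_value g' (s + 1) \<le> rel_value g (s + 1) - (g' - g)" .
  let ?F = "\<lambda>g a. u s a - g + (1 - Q a) * rel_value g (s + 1)"
  have "?F g' a \<le> ?F g a + - (g' - g)" if "a \<in> A" for a
  proof -
    have "(1 - Q a) * rel_value g' (s + 1) \<le> (1 - Q a) * rel_value g (s + 1)"
      using IH assms Qa_bounds[of a] that by (intro mult_left_mono) auto
    then show ?thesis by linarith
  qed
  then have "Min (?F g' ` A) \<le> Min (?F g ` A) + - (g' - g)"
    by (intro Min_image_le_shift) auto
  then show ?case by (simp add: rel_value_Min[OF s])
qed

lemma rel_value_lipschitz: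
  assumes "g \<le> g'"
  shows "rel_value g s \<le> rel_value g' s + (1 / q + real (M - s)) * (g' - g)"
proof (induction "M - s" arbitrary: s)
  case 0
  then show ?case using tail_shift[of g' s g] by (simp add: rel_value_tail)
next
  case (Suc n)
  then have s: "s < M" and n: "real (M - s) = real (M - (s + 1)) + 1" by auto
  let ?L = "1 / q + real (M - (s + 1))" and ?D = "rel_value g (s + 1) - rel_value g' (s + 1)"
  have "n = M - (s + 1)" using Suc.hyps(2) by simp
  from Suc.hyps(1)[OF this] have IH: "?D \<le> ?L * (g' - g)" by simp
  let ?F = "\<lambda>g a. u s a - g + (1 - Q a) * rel_value g (s + 1)"
  have "?F g a \<le> ?F g' a + (?L + 1) * (g' - g)" if "a \<in> A" for a
  proof -
    have "0 \<le> ?D" using rel_value_descent[OF assms, of "s + 1"] assms by simp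
    then have "(1 - Q a) * ?D \<le> ?D"
      using Qa_bounds[of a] that by (intro mult_left_le_one_le) auto
    then show ?thesis using IH by (simp add: algebra_simps)
  qed
  then have "Min (?F g ` A) \<le> Min (?F g' ` A) + (?L + 1) * (g' - g)"
    by (intro Min_image_le_shift) auto
  then show ?case using n by (simp add: rel_value_Min[OF s] algebra_simps)
qed

lemma continuous_rel_value: "continuous_on UNIV (\<lambda>g. rel_value g s)"
proof (rule lipschitz_on_continuous_on)
  let ?L = "1 / q + real M"
  have bound: "dist (rel_value g s) (rel_value g' s) \<le> ?L * dist g g'" if "g \<le> g'" for g g'
  proof -
    have "(1 / q + real (M - s)) * (g' - g) \<le> ?L * (g' - g)"
      using that by (intro mult_right_mono) auto
    then show ?thesis
      using rel_value_descent[OF that, of s] rel_value_lipschitz[OF that, of s] that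
      by (simp add: dist_real_def)
  qed
  show "?L-lipschitz_on UNIV (\<lambda>g. rel_value g s)"
  proof (rule lipschitz_onI)
    fix g g' :: real
    show "dist (rel_value g s) (rel_value g' s) \<le> ?L * dist g g'"
      using bound[of g g'] bound[of g' g] by (cases "g \<le> g'") (simp_all add: dist_commute)
  qed (use q_pos in simp)
qed

definition g_star :: real where "g_star = (SOME g. rel_value g 1 = 0)"

lemma rel_value_g_star: "rel_value g_star 1 = 0"
proof -
  have "\<exists>g. rel_value g 1 = 0"
    using rel_value_descent by (rule exists_root_if_descending_lipschitz[OF continuous_rel_value])
  then show ?thesis unfolding g_star_def by (rule someI_ex)
qed

lemma rel_value_le_tail: "rel_value g s \<le> tail g s"
proof (induction "M - s" arbitrary: s)
  case 0
  then show ?case by (simp add: rel_value_tail)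
next
  case (Suc n)
  then have s: "s < M" by simp
  have "rel_value g s \<le> u s a_star - g + (1 - Q a_star) * rel_value g (s + 1)"
    unfolding rel_value_Min[OF s] using a_star_in by (intro Min_le) auto
  also have "\<dots> \<le> u s a_star - g + (1 - q) * tail g (s + 1)"
    using Suc q_le_1 by (simp add: Q_a_star mult_left_mono)
  also have "\<dots> = tail g s" by (rule tail_rec[symmetric])
  finally show ?case .
qed

lemma tail_c_g_star: "- (tail_a + tail_b) \<le> tail_c g_star"
proof -
  have "0 \<le> tail g_star 1" using rel_value_le_tail[of g_star 1] rel_value_g_star by simp
  then have "g_star \<le> fixed_cost a_star + tail_a + tail_b"
    using q_pos by (simp add: tail_def tail_c_def field_simps)
  then show ?thesis
    using q_pos q_le_1 tail_a_nonneg tail_b_nonneg by (simp add: tail_c_def field_simps)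
qed

abbreviation h_star :: "nat \<Rightarrow> real" where "h_star \<equiv> rel_value g_star"

lemma h_star_Suc_0 [simp]: "h_star (Suc 0) = 0"
  using rel_value_g_star by simp

lemma bellman_h_star:
  assumes "a \<in> A"
  shows "g_star + h_star s \<le> u s a + Q a * h_star 1 + (1 - Q a) * h_star (s + 1)"
proof (cases "s < M")
  case True
  then have "h_star s \<le> u s a - g_star + (1 - Q a) * h_star (s + 1)"
    unfolding rel_value_Min[OF True] using assms by (intro Min_le) auto
  then show ?thesis by simp
next
  case False
  then have "h_star s = u s a_star - g_star + (1 - q) * tail g_star (s + 1)"
    "h_star (s + 1) = tail g_star (s + 1)"
    using tail_rec[of g_star s] by (simp_all add: rel_value_tail)
  moreover have "- (tail_a + tail_b) \<le> tail g_star (s + 1)"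
    using tail_c_g_star tail_c_le_tail order_trans by blast
  ultimately show ?thesis
    using a_star_optimal_beyond_M[OF _ assms] False by simp
qed

definition \<phi>_star :: "nat \<Rightarrow> nat set" where
  "\<phi>_star s = (if M \<le> s then a_star
     else arg_min_on (\<lambda>a. u s a - g_star + (1 - Q a) * h_star (s + 1)) A)"

lemma \<phi>_star_in: "\<phi>_star s \<in> A"
  using a_star_in arg_min_if_finite(1)[of A] by (auto simp: \<phi>_star_def)

lemma bellman_\<phi>_star:
  "g_star + h_star s
    = u s (\<phi>_star s) + Q (\<phi>_star s) * h_star 1 + (1 - Q (\<phi>_star s)) * h_star (s + 1)"
proof (cases "M \<le> s")
  case True
  then show ?thesis
    using tail_rec[of g_star s] by (simp add: \<phi>_star_def rel_value_tail Q_a_star)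
next
  case False
  let ?F = "\<lambda>a. u s a - g_star + (1 - Q a) * h_star (s + 1)"
  have "h_star s = Min (?F ` A)" using False by (simp add: rel_value_Min)
  also have "\<dots> = ?F (arg_min_on ?F A)"
  proof (rule Min_eqI)
    have fin: "finite A" and ne: "A \<noteq> {}" by auto
    show "?F (arg_min_on ?F A) \<in> ?F ` A"
      using arg_min_if_finite(1)[OF fin ne] by (rule imageI)
    fix y assume "y \<in> ?F ` A"
    then obtain a where "a \<in> A" and "y = ?F a" by blast
    then show "?F (arg_min_on ?F A) \<le> y" using arg_min_least[OF fin ne, of a ?F] by simp
  qed simp
  finally show ?thesis using False by (simp add: \<phi>_star_def)
qed

lemma h_star_lower: "min (tail_c g_star) (Min (h_star ` {..M})) \<le> h_star s"
proof (cases "M \<le> s")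
  case True
  then show ?thesis using tail_c_le_tail[of g_star s] by (simp add: rel_value_tail)
next
  case False
  then show ?thesis by (simp add: min.coboundedI2)
qed

lemma h_star_growth:
  assumes "1 \<le> s"
  shows "h_star s \<le> (tail_a + tail_b + \<bar>tail_c g_star\<bar>) * (real s)\<^sup>2"
proof -
  have s: "1 \<le> real s" using assms by simp
  have "tail_b * real s \<le> tail_b * (real s)\<^sup>2"
    using s tail_b_nonneg by (intro mult_left_mono) (simp_all add: power2_eq_square)
  moreover have "\<bar>tail_c g_star\<bar> * 1 \<le> \<bar>tail_c g_star\<bar> * (real s)\<^sup>2"
    using s by (intro mult_left_mono) (simp_all add: one_le_power)
  ultimately have "tail g_star s \<le> (tail_a + tail_b + \<bar>tail_c g_star\<bar>) * (real s)\<^sup>2"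
    unfolding tail_def distrib_right by linarith
  then show ?thesis using rel_value_le_tail[of g_star s] by linarith
qed

theorem \<phi>_star_optimal: "optimal N p c r \<beta> \<epsilon> (stationary \<phi>_star)"
proof (rule optimal_stationary_if_bellman)
  show "\<phi>_star s \<in> A" for s by (rule \<phi>_star_in)
  show "g_star + h_star s \<le> u s a + Q a * h_star 1 + (1 - Q a) * h_star (s + 1)" if "a \<in> A" for s a
    using that by (rule bellman_h_star)
  show "g_star + h_star s
    = u s (\<phi>_star s) + Q (\<phi>_star s) * h_star 1 + (1 - Q (\<phi>_star s)) * h_star (s + 1)"
    for s by (rule bellman_\<phi>_star)
  show "min (tail_c g_star) (Min (h_star ` {..M})) \<le> h_star s" for s by (rule h_star_lower)
  show "h_star s \<le> (tail_a + tail_b + \<bar>tail_c g_star\<bar>) * (real s)\<^sup>2" if "1 \<le> s" for s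
    using that by (rule h_star_growth)
  show "0 \<le> tail_a + tail_b + \<bar>tail_c g_star\<bar>" using tail_a_nonneg tail_b_nonneg by simp
qed

end

theorem theorem1:
  fixes N :: nat and p c r :: "nat \<Rightarrow> real" and \<beta> \<epsilon> :: real
  assumes "N \<ge> 1"
    and "\<forall>n\<in>{1..N}. 0 < p n \<and> p n \<le> 1"
    and "\<forall>n\<in>{1..N}. c n \<ge> 0"
    and "\<forall>n\<in>{1..N}. 0 < r n \<and> r n \<le> 1"
    and "0 < \<beta>" and "\<beta> < 1" and "\<epsilon> > 0"
  shows "\<exists>\<phi> :: nat \<Rightarrow> nat set. optimal N p c r \<beta> \<epsilon> (stationary \<phi>) \<and>
    (\<exists>(K::nat) (b :: nat \<Rightarrow> nat set) (\<theta> :: nat \<Rightarrow> nat).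
       K \<ge> 1 \<and>
       (\<forall>k\<in>{1..K}. b k \<subseteq> {1..N}) \<and>
       (\<forall>k. 1 \<le> k \<and> k < K \<longrightarrow> b k \<noteq> b (k + 1)) \<and>
       (\<forall>k. 1 \<le> k \<and> k < K \<longrightarrow> \<theta> k \<ge> 1) \<and>
       (\<forall>k. 1 \<le> k \<and> k + 1 < K \<longrightarrow> \<theta> k \<le> \<theta> (k + 1)) \<and>
       (\<forall>s\<ge>1. \<forall>k\<in>{1..K}. (k = 1 \<or> \<theta> (k - 1) \<le> s) \<and> (k = K \<or> s < \<theta> k) \<longrightarrow> \<phi> s = b k))"
proof -
  interpret recruitment_mdp N p c r \<beta> \<epsilon> using assms by unfold_locales
  have "\<forall>s\<ge>M. \<phi>_star s = a_star" by (simp add: \<phi>_star_def)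
  from threshold_form_if_eventually_const[OF this]
  obtain K b \<theta> where form: "threshold_form \<phi>_star K b \<theta>"
    and range: "b ` {1..K} \<subseteq> \<phi>_star ` {1..}"
    by blast
  have "\<forall>k\<in>{1..K}. b k \<subseteq> {1..N}" using range \<phi>_star_in by blast
  with form show ?thesis
    unfolding threshold_form_def
    by (intro exI[of _ \<phi>_star] conjI[OF \<phi>_star_optimal] exI[of _ K] exI[of _ b] exI[of _ \<theta>]) simp
qed

end
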